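(* Let $\varphi:U\times U\to V$ be a fully-regular alternating bilinear map. Then $\mathcal{S}_\varphi=\{\varphi(x,-)\mid x\in U\}\subseteq\mathcal{L}(U,V)$ has the column property, i.e. every matrix space representing it in some bases of $U$ and $V$ has the column property.
   Context: $U,V$ finite-dimensional over a field $\mathbb{K}$. $\varphi$ is fully-regular if $V$ is spanned by the values of $\varphi$ and $\varphi(x,-)\neq 0$ for every nonzero $x\in U$ (equivalently $\varphi(-,x)\ne0$, as $\varphi$ is alternating). Matrix spaces are equivalent ($\sim$) if $\mathcal{M}=P\mathcal{M}'Q$ with $P,Q$ invertible. A subspace is defective if none of its matrices has rank equal to its number of columns. $\mathcal{M}\subseteq\mathrm{Mat}_{m,n}(\mathbb{K})$ is $(r,s)$-decomposed ($0\le r\le m$, $1\le s\le n$) if every $M$ is of the form $\begin{bmatrix} ?_{r\times s}& C(M)\\ B(M)&0_{(m-r)\times(n-s)}\end{bmatrix}$, with lower space $B(\mathcal{M})$; $\mathcal{M}$ has the column property if every $(r,s)$-decomposed space equivalent to $\mathcal{M}$ has defective lower space. *)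

theory Defs
  imports "Jordan_Normal_Form.DL_Rank" "Jordan_Normal_Form.VS_Connect"
begin

text \<open>Coordinates: U = K^n, V = K^m, vectors of dimension n resp. m (JNF carrier_vec).
  Matrices are JNF matrices; spaces of matrices are sets of matrices.\<close>

definition alt_bilinear :: "nat \<Rightarrow> nat \<Rightarrow> ('a::field vec \<Rightarrow> 'a vec \<Rightarrow> 'a vec) \<Rightarrow> bool" where
  "alt_bilinear n m \<phi> \<longleftrightarrow>
     (\<forall>x\<in>carrier_vec n. \<forall>y\<in>carrier_vec n. \<phi> x y \<in> carrier_vec m) \<and>
     (\<forall>x\<in>carrier_vec n. \<forall>x'\<in>carrier_vec n. \<forall>y\<in>carrier_vec n. \<phi> (x + x') y = \<phi> x y + \<phi> x' y) \<and>
     (\<forall>x\<in>carrier_vec n. \<forall>y\<in>carrier_vec n. \<forall>y'\<in>carrier_vec n. \<phi> x (y + y') = \<phi> x y + \<phi> x y') \<and>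
     (\<forall>c. \<forall>x\<in>carrier_vec n. \<forall>y\<in>carrier_vec n. \<phi> (c \<cdot>\<^sub>v x) y = c \<cdot>\<^sub>v \<phi> x y) \<and>
     (\<forall>c. \<forall>x\<in>carrier_vec n. \<forall>y\<in>carrier_vec n. \<phi> x (c \<cdot>\<^sub>v y) = c \<cdot>\<^sub>v \<phi> x y) \<and>
     (\<forall>x\<in>carrier_vec n. \<phi> x x = 0\<^sub>v m)"

definition fully_regular :: "nat \<Rightarrow> nat \<Rightarrow> ('a::field vec \<Rightarrow> 'a vec \<Rightarrow> 'a vec) \<Rightarrow> bool" where
  "fully_regular n m \<phi> \<longleftrightarrow>
     LinearCombinations.module.span class_ring (module_vec TYPE('a) m)
        {\<phi> x y | x y. x \<in> carrier_vec n \<and> y \<in> carrier_vec n} = carrier_vec m \<and>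
     (\<forall>x\<in>carrier_vec n. x \<noteq> 0\<^sub>v n \<longrightarrow> (\<exists>y\<in>carrier_vec n. \<phi> x y \<noteq> 0\<^sub>v m))"

definition left_mat :: "nat \<Rightarrow> nat \<Rightarrow> ('a::field vec \<Rightarrow> 'a vec \<Rightarrow> 'a vec) \<Rightarrow> 'a vec \<Rightarrow> 'a mat" where
  "left_mat n m \<phi> x = mat m n (\<lambda>(i, j). \<phi> x (unit_vec n j) $ i)"

definition mat_space_equiv :: "nat \<Rightarrow> nat \<Rightarrow> 'a::field mat set \<Rightarrow> 'a mat set \<Rightarrow> bool" where
  "mat_space_equiv m n M M' \<longleftrightarrow>
     (\<exists>P Q. P \<in> carrier_mat m m \<and> Q \<in> carrier_mat n n \<and> invertible_mat P \<and> invertible_mat Q \<and>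
            M = (\<lambda>A. P * A * Q) ` M')"

definition decomposed :: "nat \<Rightarrow> nat \<Rightarrow> nat \<Rightarrow> nat \<Rightarrow> 'a::field mat set \<Rightarrow> bool" where
  "decomposed r s m n M \<longleftrightarrow> r \<le> m \<and> 1 \<le> s \<and> s \<le> n \<and> M \<subseteq> carrier_mat m n \<and>
     (\<forall>A\<in>M. \<forall>i j. r \<le> i \<longrightarrow> i < m \<longrightarrow> s \<le> j \<longrightarrow> j < n \<longrightarrow> A $$ (i, j) = 0)"

definition lower_space :: "nat \<Rightarrow> nat \<Rightarrow> nat \<Rightarrow> 'a::field mat set \<Rightarrow> 'a mat set" where
  "lower_space r s m M = (\<lambda>A. mat (m - r) s (\<lambda>(i, j). A $$ (i + r, j))) ` M"

definition defective :: "nat \<Rightarrow> nat \<Rightarrow> 'a::field mat set \<Rightarrow> bool" where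
  "defective k c L \<longleftrightarrow> (\<forall>A\<in>L. vec_space.rank k A \<noteq> c)"

definition column_property :: "nat \<Rightarrow> nat \<Rightarrow> 'a::field mat set \<Rightarrow> bool" where
  "column_property m n M \<longleftrightarrow>
     (\<forall>M' r s. mat_space_equiv m n M' M \<and> decomposed r s m n M' \<longrightarrow>
        defective (m - r) s (lower_space r s m M'))"

end

theory Submission
  imports Defs
begin

(* After changing bases and reparametrising x, every space equivalent to S_phi has the form
   {N x | x} with x, y |-> N x * y alternating: N x * x = 0 and N x * y = - (N y * x).
   Suppose such a space is (r,s)-decomposed and the lower block B of N x has rank s. Since the
   lower-right block of N x vanishes, the lower rows of N x * x = 0 say that B kills the first
   s coordinates of x, so these are zero. Column j < s of B is the lower part of
   N x * e_j = - (N e_j * x), and the lower rows of N e_j only see those first s coordinates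
   of x; hence B = 0, contradicting s >= 1. *)

lemma mult_mat_vec_unit_vec:
  fixes A :: "'a::semiring_1 mat"
  assumes "A \<in> carrier_mat m n" "i < m" "j < n"
  shows "(A *\<^sub>v unit_vec n j) $ i = A $$ (i, j)"
proof -
  have "row A i \<bullet> unit_vec n j = row A i $ j" by (rule scalar_prod_right_unit[OF assms(3)])
  then show ?thesis using assms by simp
qed

lemma mult_mat_vec_zero:
  fixes A :: "'a::semiring_0 mat"
  assumes "A \<in> carrier_mat nr nc"
  shows "A *\<^sub>v 0\<^sub>v nc = 0\<^sub>v nr"
  using assms by (intro eq_vecI) auto

lemma mult_mat_vec_uminus:
  fixes A :: "'a::ring mat"
  assumes "A \<in> carrier_mat nr nc" "v \<in> carrier_vec nc"
  shows "A *\<^sub>v (- v) = - (A *\<^sub>v v)"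
  using assms by (intro eq_vecI) auto

lemma full_column_rank_mult_vec_eq_zero:
  fixes B :: "'a::field mat"
  assumes B: "B \<in> carrier_mat k c" and rank: "vec_space.rank k B = c"
    and v: "v \<in> carrier_vec c" and Bv: "B *\<^sub>v v = 0\<^sub>v k"
  shows "v = 0\<^sub>v c"
proof -
  interpret vec_space "TYPE('a)" k .
  have distinct: "distinct (cols B)"
  proof (rule ccontr)
    assume "\<not> distinct (cols B)"
    obtain S where S: "maximal S (\<lambda>T. T \<subseteq> set (cols B) \<and> lin_indpt T)"
      using maximal_exists[of "\<lambda>T. T \<subseteq> set (cols B) \<and> lin_indpt T" "card (set (cols B))" "{}"]
      by (meson List.finite_set card_mono empty_iff empty_subsetI finite_lin_indpt2 rev_finite_subset)
    then have "card S \<le> card (set (cols B))" by (simp add: card_mono maximal_def)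
    also have "\<dots> < length (cols B)"
      using \<open>\<not> distinct (cols B)\<close> card_distinct card_length nat_less_le by metis
    finally have "card S < c" using B by simp
    then show False using rank_card_indpt[OF B S] rank by simp
  qed
  show ?thesis
  proof (rule ccontr)
    assume "v \<noteq> 0\<^sub>v c"
    then have "lin_dep (set (cols B))" using lin_depI[OF B v _ Bv distinct] by blast
    with full_rank_lin_indpt[OF B rank distinct] show False by simp
  qed
qed

lemma invertible_mat_mult_vec_image:
  fixes Q :: "'a::field mat"
  assumes "Q \<in> carrier_mat n n" "invertible_mat Q"
  shows "(*\<^sub>v) Q ` carrier_vec n = carrier_vec n"
proof -
  obtain Q' where "Q * Q' = 1\<^sub>m (dim_row Q)" "Q' * Q = 1\<^sub>m (dim_row Q')"
    using assms(2) unfolding invertible_mat_def inverts_mat_def by blast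
  then have QQ': "Q * Q' = 1\<^sub>m n" and Q': "Q' \<in> carrier_mat n n"
    using assms(1) by (metis carrier_matD carrier_matI index_mult_mat(2,3) index_one_mat(2,3))+
  have "v = Q *\<^sub>v (Q' *\<^sub>v v)" if "v \<in> carrier_vec n" for v
    using that assms(1) Q' QQ' by (metis assoc_mult_mat_vec one_mult_mat_vec)
  then show ?thesis using assms(1) Q' by fastforce
qed

lemma image_carrier_vec_reparametrize:
  fixes Q :: "'a::field mat"
  assumes "Q \<in> carrier_mat n n" "invertible_mat Q"
  shows "(\<lambda>x. f (Q *\<^sub>v x)) ` carrier_vec n = f ` carrier_vec n"
proof -
  have "f ` (*\<^sub>v) Q ` carrier_vec n = (\<lambda>x. f (Q *\<^sub>v x)) ` carrier_vec n" by (rule image_image)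
  then show ?thesis unfolding invertible_mat_mult_vec_image[OF assms] ..
qed

definition lower_block :: "nat \<Rightarrow> nat \<Rightarrow> nat \<Rightarrow> 'a mat \<Rightarrow> 'a mat" where
  "lower_block r s m A = mat (m - r) s (\<lambda>(i, j). A $$ (i + r, j))"

lemma lower_block_carrier[simp]: "lower_block r s m A \<in> carrier_mat (m - r) s"
  and dim_lower_block[simp]: "dim_row (lower_block r s m A) = m - r" "dim_col (lower_block r s m A) = s"
  unfolding lower_block_def by simp_all

lemma lower_space_eq_image_lower_block: "lower_space r s m M = lower_block r s m ` M"
  unfolding lower_space_def lower_block_def ..

lemma lower_block_mult_vec_first:
  fixes A :: "'a::semiring_0 mat"
  assumes A: "A \<in> carrier_mat m n" and "s \<le> n"
    and zero: "\<And>i j. r \<le> i \<Longrightarrow> i < m \<Longrightarrow> s \<le> j \<Longrightarrow> j < n \<Longrightarrow> A $$ (i, j) = 0"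
    and v: "v \<in> carrier_vec n" and i: "i < m - r"
  shows "(lower_block r s m A *\<^sub>v vec_first v s) $ i = (A *\<^sub>v v) $ (i + r)"
proof -
  have "(lower_block r s m A *\<^sub>v vec_first v s) $ i = (\<Sum>j\<in>{0..<s}. A $$ (i + r, j) * v $ j)"
    using i by (simp add: lower_block_def vec_first_def mult_mat_vec_def scalar_prod_def)
  also have "\<dots> = (\<Sum>j\<in>{0..<n}. A $$ (i + r, j) * v $ j)"
    by (rule sum.mono_neutral_left) (use \<open>s \<le> n\<close> i zero in auto)
  also have "\<dots> = (A *\<^sub>v v) $ (i + r)"
    using A v i by (simp add: mult_mat_vec_def scalar_prod_def)
  finally show ?thesis .
qed

definition alternating_family :: "nat \<Rightarrow> nat \<Rightarrow> ('a::field vec \<Rightarrow> 'a mat) \<Rightarrow> bool" where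
  "alternating_family m n N \<longleftrightarrow>
     (\<forall>x\<in>carrier_vec n. N x \<in> carrier_mat m n \<and> N x *\<^sub>v x = 0\<^sub>v m) \<and>
     (\<forall>x\<in>carrier_vec n. \<forall>y\<in>carrier_vec n. N x *\<^sub>v y = - (N y *\<^sub>v x))"

lemma alternating_familyD:
  assumes "alternating_family m n N" "x \<in> carrier_vec n"
  shows "N x \<in> carrier_mat m n" "N x *\<^sub>v x = 0\<^sub>v m"
  using assms unfolding alternating_family_def by blast+

lemma alternating_family_skew:
  assumes "alternating_family m n N" "x \<in> carrier_vec n" "y \<in> carrier_vec n"
  shows "N x *\<^sub>v y = - (N y *\<^sub>v x)"
  using assms unfolding alternating_family_def by blast

lemma alternating_family_transform:
  assumes N: "alternating_family m n N" and P: "P \<in> carrier_mat m m" and Q: "Q \<in> carrier_mat n n"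
  shows "alternating_family m n (\<lambda>x. P * N (Q *\<^sub>v x) * Q)"
proof -
  have N_carrier: "N (Q *\<^sub>v x) \<in> carrier_mat m n" if "x \<in> carrier_vec n" for x
    using alternating_familyD(1)[OF N mult_mat_vec_carrier[OF Q that]] .
  have mult: "(P * N (Q *\<^sub>v x) * Q) *\<^sub>v y = P *\<^sub>v (N (Q *\<^sub>v x) *\<^sub>v (Q *\<^sub>v y))"
    if "x \<in> carrier_vec n" "y \<in> carrier_vec n" for x y
  proof -
    have "(P * N (Q *\<^sub>v x) * Q) *\<^sub>v y = (P * N (Q *\<^sub>v x)) *\<^sub>v (Q *\<^sub>v y)"
      using N_carrier[OF that(1)] P Q that(2) by (intro assoc_mult_mat_vec) auto
    also have "\<dots> = P *\<^sub>v (N (Q *\<^sub>v x) *\<^sub>v (Q *\<^sub>v y))"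
      using N_carrier[OF that(1)] P Q that(2) by (intro assoc_mult_mat_vec) auto
    finally show ?thesis .
  qed
  show ?thesis
    unfolding alternating_family_def
  proof (intro conjI ballI)
    fix x y :: "'a vec" assume x: "x \<in> carrier_vec n" and y: "y \<in> carrier_vec n"
    have Qx: "Q *\<^sub>v x \<in> carrier_vec n" and Qy: "Q *\<^sub>v y \<in> carrier_vec n" using Q x y by auto
    show "(P * N (Q *\<^sub>v x) * Q) *\<^sub>v y = - ((P * N (Q *\<^sub>v y) * Q) *\<^sub>v x)"
      using alternating_family_skew[OF N Qx Qy] Qx P N_carrier[OF y] unfolding mult[OF x y] mult[OF y x]
      by (simp add: mult_mat_vec_uminus)
  next
    fix x :: "'a vec" assume x: "x \<in> carrier_vec n"
    have Qx: "Q *\<^sub>v x \<in> carrier_vec n" using Q x by simp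
    show "P * N (Q *\<^sub>v x) * Q \<in> carrier_mat m n" using P Q N_carrier[OF x] by simp
    have "N (Q *\<^sub>v x) *\<^sub>v (Q *\<^sub>v x) = 0\<^sub>v m" using alternating_familyD(2)[OF N Qx] .
    then show "(P * N (Q *\<^sub>v x) * Q) *\<^sub>v x = 0\<^sub>v m" using mult[OF x x] mult_mat_vec_zero[OF P] by simp
  qed
qed

lemma alternating_family_lower_space_defective:
  assumes N: "alternating_family m n N" and dec: "decomposed r s m n (N ` carrier_vec n)"
  shows "defective (m - r) s (lower_space r s m (N ` carrier_vec n))"
  unfolding defective_def lower_space_eq_image_lower_block
proof (intro ballI notI)
  fix B assume "B \<in> lower_block r s m ` N ` carrier_vec n" and rank: "vec_space.rank (m - r) B = s"
  then obtain x where x: "x \<in> carrier_vec n" and B: "B = lower_block r s m (N x)" by blast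
  have s: "1 \<le> s" "s \<le> n" using dec unfolding decomposed_def by auto
  note N_carrier = alternating_familyD(1)[OF N]
  have lower_entry: "(lower_block r s m (N y) *\<^sub>v vec_first v s) $ i = (N y *\<^sub>v v) $ (i + r)"
    if "y \<in> carrier_vec n" "v \<in> carrier_vec n" "i < m - r" for y v i
    using dec that N_carrier[OF that(1)]
    by (intro lower_block_mult_vec_first) (auto simp: decomposed_def)
  have B_carrier: "B \<in> carrier_mat (m - r) s" unfolding B by simp
  have "B *\<^sub>v vec_first x s = 0\<^sub>v (m - r)"
    using alternating_familyD(2)[OF N x] B_carrier lower_entry[OF x x] unfolding B
    by (intro eq_vecI) auto
  then have x_first: "vec_first x s = 0\<^sub>v s"
    using full_column_rank_mult_vec_eq_zero[OF B_carrier rank] by simp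
  have "B = 0\<^sub>m (m - r) s"
  proof (rule eq_matI)
    fix i j assume "i < dim_row (0\<^sub>m (m - r) s :: 'a mat)" "j < dim_col (0\<^sub>m (m - r) s :: 'a mat)"
    then have i: "i < m - r" and j: "j < s" by auto
    have e: "unit_vec n j \<in> carrier_vec n" by simp
    have "B $$ (i, j) = (N x *\<^sub>v unit_vec n j) $ (i + r)"
      using mult_mat_vec_unit_vec[OF N_carrier[OF x]] i j s unfolding B lower_block_def by simp
    also have "\<dots> = - ((N (unit_vec n j) *\<^sub>v x) $ (i + r))"
      using alternating_family_skew[OF N x e] N_carrier[OF e] x i by simp
    also have "(N (unit_vec n j) *\<^sub>v x) $ (i + r) = 0"
      using lower_entry[OF e x i] x_first i by simp
    finally show "B $$ (i, j) = 0\<^sub>m (m - r) s $$ (i, j)" using i j by simp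
  qed (use B_carrier in auto)
  then have "vec_space.rank (m - r) B = 0" using vec_space.rank_0I by metis
  with rank s show False by simp
qed

lemma alternating_family_column_property:
  assumes N: "alternating_family m n N"
  shows "column_property m n (N ` carrier_vec n)"
  unfolding column_property_def
proof (intro allI impI, elim conjE)
  fix M r s assume "mat_space_equiv m n M (N ` carrier_vec n)" and dec: "decomposed r s m n M"
  then obtain P Q where P: "P \<in> carrier_mat m m" and Q: "Q \<in> carrier_mat n n"
    and Q_inv: "invertible_mat Q" and M: "M = (\<lambda>A. P * A * Q) ` N ` carrier_vec n"
    unfolding mat_space_equiv_def by blast
  have "M = (\<lambda>x. P * N x * Q) ` carrier_vec n" unfolding M image_image ..
  also have "\<dots> = (\<lambda>x. P * N (Q *\<^sub>v x) * Q) ` carrier_vec n"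
    by (rule image_carrier_vec_reparametrize[OF Q Q_inv, symmetric])
  finally have M_eq: "M = (\<lambda>x. P * N (Q *\<^sub>v x) * Q) ` carrier_vec n" .
  show "defective (m - r) s (lower_space r s m M)"
    using alternating_family_lower_space_defective[OF alternating_family_transform[OF N P Q]] dec
    unfolding M_eq .
qed

lemma alt_bilinear_carrier:
  assumes "alt_bilinear n m \<phi>" "x \<in> carrier_vec n" "y \<in> carrier_vec n"
  shows "\<phi> x y \<in> carrier_vec m"
  using assms unfolding alt_bilinear_def by blast

lemma alt_bilinear_right_zero:
  assumes \<phi>: "alt_bilinear n m \<phi>" and x: "x \<in> carrier_vec n"
  shows "\<phi> x (0\<^sub>v n) = 0\<^sub>v m"
proof -
  have carrier: "\<phi> x (0\<^sub>v n) \<in> carrier_vec m"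
    using alt_bilinear_carrier[OF \<phi> x zero_carrier_vec] .
  have "\<phi> x (0\<^sub>v n) = \<phi> x (0 \<cdot>\<^sub>v 0\<^sub>v n)" by (intro arg_cong[where f = "\<phi> x"] eq_vecI) auto
  also have "\<dots> = 0 \<cdot>\<^sub>v \<phi> x (0\<^sub>v n)"
    using \<phi> x unfolding alt_bilinear_def by (meson zero_carrier_vec)
  also have "\<dots> = 0\<^sub>v m" using carrier by (intro eq_vecI) auto
  finally show ?thesis .
qed

lemma alt_bilinear_skew:
  assumes \<phi>: "alt_bilinear n m \<phi>" and x: "x \<in> carrier_vec n" and y: "y \<in> carrier_vec n"
  shows "\<phi> x y = - \<phi> y x"
proof -
  have carrier: "\<phi> x y \<in> carrier_vec m" "\<phi> y x \<in> carrier_vec m"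
    using alt_bilinear_carrier[OF \<phi>] x y by blast+
  have alt: "\<phi> v v = 0\<^sub>v m" if "v \<in> carrier_vec n" for v
    using \<phi> that unfolding alt_bilinear_def by blast
  have "0\<^sub>v m = \<phi> (x + y) (x + y)" using alt x y by simp
  also have "\<dots> = \<phi> x (x + y) + \<phi> y (x + y)"
    using \<phi> x y unfolding alt_bilinear_def by (meson add_carrier_vec)
  also have "\<dots> = (\<phi> x x + \<phi> x y) + (\<phi> y x + \<phi> y y)"
    using \<phi> x y unfolding alt_bilinear_def by metis
  also have "\<dots> = \<phi> x y + \<phi> y x" using alt x y carrier by simp
  finally have sum_zero: "\<phi> x y + \<phi> y x = 0\<^sub>v m" ..
  show ?thesis
  proof (rule eq_vecI)
    fix i assume "i < dim_vec (- \<phi> y x)"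
    then have i: "i < m" using carrier by simp
    have "\<phi> x y $ i + \<phi> y x $ i = 0"
      using arg_cong[OF sum_zero, of "\<lambda>v. v $ i"] carrier i by simp
    then show "\<phi> x y $ i = (- \<phi> y x) $ i" using i carrier by (simp add: eq_neg_iff_add_eq_0)
  qed (use carrier in simp)
qed

lemma left_mat_mult_vec:
  assumes \<phi>: "alt_bilinear n m \<phi>" and x: "x \<in> carrier_vec n" and v: "v \<in> carrier_vec n"
  shows "left_mat n m \<phi> x *\<^sub>v v = \<phi> x v"
proof -
  note carrier = alt_bilinear_carrier[OF \<phi> x]
  define w where "w k = vec n (\<lambda>j. if j < k then v $ j else 0)" for k
  have w_carrier: "w k \<in> carrier_vec n" for k unfolding w_def by simp
  have partial_sums: "\<phi> x (w k) $ i = (\<Sum>j<k. \<phi> x (unit_vec n j) $ i * v $ j)"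
    if "k \<le> n" "i < m" for k i
    using that
  proof (induction k)
    case 0
    have "w 0 = 0\<^sub>v n" unfolding w_def by auto
    then show ?case using alt_bilinear_right_zero[OF \<phi> x] 0 by simp
  next
    case (Suc k)
    have "w (Suc k) = w k + v $ k \<cdot>\<^sub>v unit_vec n k"
      unfolding w_def using Suc by (intro eq_vecI) (auto simp: unit_vec_def less_Suc_eq)
    then have "\<phi> x (w (Suc k)) = \<phi> x (w k) + v $ k \<cdot>\<^sub>v \<phi> x (unit_vec n k)"
      using \<phi> x w_carrier unfolding alt_bilinear_def by (metis smult_carrier_vec unit_vec_carrier)
    then show ?case
      using Suc carrier[OF w_carrier[of k]] carrier[OF unit_vec_carrier[of n k]] by (simp add: mult.commute)
  qed
  have "w n = v" unfolding w_def using v by auto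
  then show ?thesis
    using partial_sums[of n] carrier[OF v] v
    by (intro eq_vecI) (auto simp: left_mat_def mult_mat_vec_def scalar_prod_def lessThan_atLeast0)
qed

lemma alt_bilinear_left_mat_alternating_family:
  fixes \<phi> :: "'a::field vec \<Rightarrow> 'a vec \<Rightarrow> 'a vec"
  assumes \<phi>: "alt_bilinear n m \<phi>"
  shows "alternating_family m n (left_mat n m \<phi>)"
  unfolding alternating_family_def
proof (intro conjI ballI)
  fix x y :: "'a vec" assume x: "x \<in> carrier_vec n" and y: "y \<in> carrier_vec n"
  show "left_mat n m \<phi> x *\<^sub>v y = - (left_mat n m \<phi> y *\<^sub>v x)"
    unfolding left_mat_mult_vec[OF \<phi> x y] left_mat_mult_vec[OF \<phi> y x]
    by (rule alt_bilinear_skew[OF \<phi> x y])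
next
  fix x :: "'a vec" assume x: "x \<in> carrier_vec n"
  show "left_mat n m \<phi> x \<in> carrier_mat m n" by (simp add: left_mat_def)
  show "left_mat n m \<phi> x *\<^sub>v x = 0\<^sub>v m"
    using \<phi> x unfolding left_mat_mult_vec[OF \<phi> x x] alt_bilinear_def by blast
qed

theorem mainTheorem16:
  fixes \<phi> :: "'a::field vec \<Rightarrow> 'a vec \<Rightarrow> 'a vec" and n m :: nat
  assumes "alt_bilinear n m \<phi>" and "fully_regular n m \<phi>"
  shows "\<forall>P Q. P \<in> carrier_mat m m \<and> Q \<in> carrier_mat n n \<and> invertible_mat P \<and> invertible_mat Q \<longrightarrow>
           column_property m n ((\<lambda>x. P * left_mat n m \<phi> x * Q) ` carrier_vec n)"
proof (intro allI impI, elim conjE)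
  fix P Q :: "'a mat"
  assume P: "P \<in> carrier_mat m m" and Q: "Q \<in> carrier_mat n n" and "invertible_mat Q"
  then have "(\<lambda>x. P * left_mat n m \<phi> x * Q) ` carrier_vec n
      = (\<lambda>x. P * left_mat n m \<phi> (Q *\<^sub>v x) * Q) ` carrier_vec n"
    by (intro image_carrier_vec_reparametrize[symmetric])
  moreover have "alternating_family m n (\<lambda>x. P * left_mat n m \<phi> (Q *\<^sub>v x) * Q)"
    using alternating_family_transform[OF alt_bilinear_left_mat_alternating_family[OF assms(1)] P Q] .
  ultimately show "column_property m n ((\<lambda>x. P * left_mat n m \<phi> x * Q) ` carrier_vec n)"
    using alternating_family_column_property by metis
qed

end
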